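(* Let $\mathcal{P}$ be a finite set of atomic propositions, let $u \in (2^{\mathcal{P}})^\ast$, $v \in (2^{\mathcal{P}})^+$, let $\rho$ be a regular expression, and let $m$ be the number of states of the minimal deterministic finite automaton over the alphabet $2^{\mathcal{P}}$ recognizing $L(\rho)$. Suppose $uv^\omega[i,j) \vdash \rho$ for some $i, j \in \mathbb{N}$ with $i \le |u| < j$. Then there exists $k \in \mathbb{N}$ with $|u| \le k \le |u| + m|v|$ such that $uv^\omega[i,k) \vdash \rho$ and $k \equiv j \pmod{|v|}$.
   Context: For a word $\alpha = a_0a_1\ldots$ and $i\le j$, $\alpha[i,j) = a_i\ldots a_{j-1}$ and $\alpha[i]=a_i$; $uv^\omega = uvvv\ldots$. Regular expressions: atomic expressions $\xi ::= p \in \mathcal{P} \mid \lnot \xi \mid \xi \lor \xi$, with $[\![p]\!] = \{A \subseteq \mathcal{P} : p \in A\}$, $[\![\lnot\xi]\!] = 2^{\mathcal{P}} \setminus [\![\xi]\!]$, $[\![\xi_1 \lor \xi_2]\!] = [\![\xi_1]\!] \cup [\![\xi_2]\!]$. Regular expressions $\rho ::= \varepsilon \mid \xi \mid \rho + \rho \mid \rho \circ \rho \mid \rho^\ast$. Matching relation on infixes of a word $w$: $w[i,j) \vdash \varepsilon$ iff $j=i$; $w[i,j) \vdash \xi$ iff $j=i+1$ and $w[i] \in [\![\xi]\!]$; $w[i,j)\vdash \rho_1+\rho_2$ iff $w[i,j)\vdash\rho_1$ or $w[i,j)\vdash\rho_2$; $w[i,j)\vdash \rho_1\circ\rho_2$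 iff there is $k\in\{i,\ldots,j\}$ with $w[i,k)\vdash\rho_1$ and $w[k,j)\vdash\rho_2$; $w[i,j)\vdash\rho^\ast$ iff $j=i$ or there is $k\in\{i+1,\ldots,j\}$ with $w[i,k)\vdash\rho$ and $w[k,j)\vdash\rho^\ast$. $L(\rho) = \{ w \in (2^{\mathcal{P}})^\ast : w[0,|w|) \vdash \rho\}$. *)

theory Defs
  imports Main
begin

(* Atomic propositions: a finite type 'p (so P = UNIV :: 'p set, finite).
   Letters of the alphabet 2^P are values of type 'p set. *)

datatype 'p atomic = AProp 'p | ANot "'p atomic" | AOr "'p atomic" "'p atomic"

fun sem_atomic :: "'p atomic \<Rightarrow> 'p set set" where
  "sem_atomic (AProp p) = {A. p \<in> A}"
| "sem_atomic (ANot x) = UNIV - sem_atomic x"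
| "sem_atomic (AOr x y) = sem_atomic x \<union> sem_atomic y"

datatype 'p rexp = Eps | Atom "'p atomic" | Plus "'p rexp" "'p rexp"
  | Conc "'p rexp" "'p rexp" | Star "'p rexp"

(* matching relation  w[i,j) |- rho  on a (finite or infinite) word given as a
   function from positions to letters *)
inductive matches :: "(nat \<Rightarrow> 'p set) \<Rightarrow> nat \<Rightarrow> nat \<Rightarrow> 'p rexp \<Rightarrow> bool" where
  m_eps: "matches w i i Eps"
| m_atom: "w i \<in> sem_atomic x \<Longrightarrow> matches w i (Suc i) (Atom x)"
| m_plus1: "matches w i j r1 \<Longrightarrow> matches w i j (Plus r1 r2)"
| m_plus2: "matches w i j r2 \<Longrightarrow> matches w i j (Plus r1 r2)"
| m_conc: "\<lbrakk>i \<le> k; k \<le> j; matches w i k r1; matches w k j r2\<rbrakk> \<Longrightarrow> matches w i j (Conc r1 r2)"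
| m_star0: "matches w i i (Star r)"
| m_starS: "\<lbrakk>i < k; k \<le> j; matches w i k r; matches w k j (Star r)\<rbrakk> \<Longrightarrow> matches w i j (Star r)"

definition lang :: "'p rexp \<Rightarrow> 'p set list set" where
  "lang r = {w. matches (\<lambda>n. w ! n) 0 (length w) r}"

definition lasso :: "'a list \<Rightarrow> 'a list \<Rightarrow> nat \<Rightarrow> 'a" where
  "lasso u v n = (if n < length u then u ! n else v ! ((n - length u) mod length v))"

type_synonym 'a dfa = "nat set \<times> nat \<times> (nat \<Rightarrow> 'a \<Rightarrow> nat) \<times> nat set"

definition is_dfa :: "'a dfa \<Rightarrow> bool" where
  "is_dfa A = (case A of (Q, q0, \<delta>, F) \<Rightarrow>
     finite Q \<and> q0 \<in> Q \<and> F \<subseteq> Q \<and> (\<forall>q\<in>Q. \<forall>a. \<delta> q a \<in> Q))"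

definition dfa_lang :: "'a dfa \<Rightarrow> 'a list set" where
  "dfa_lang A = (case A of (Q, q0, \<delta>, F) \<Rightarrow> {w. foldl \<delta> q0 w \<in> F})"

definition dfa_states :: "'a dfa \<Rightarrow> nat set" where
  "dfa_states A = fst A"

definition min_dfa_size :: "'a list set \<Rightarrow> nat" where
  "min_dfa_size L = (LEAST n. \<exists>A. is_dfa A \<and> dfa_lang A = L \<and> card (dfa_states A) = n)"

end

theory Submission
  imports Defs
begin

(* Read the minimal DFA for L(rho) along u v^omega starting at position i: rho matches [i,k)
   iff the state reached after position k is accepting.  Past |u| the word has period |v|, so
   if j > |u| + m |v| then among the m + 1 positions j - m|v|, ..., j - |v|, j two are reached
   in the same state; cutting out the segment between them, whose length is a multiple of |v|,
   leaves the rest of the word unchanged and yields a shorter match ending at a position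
   congruent to j.  The minimal DFA exists because a regular language has only finitely many
   left quotients (Brzozowski derivatives), and these are the states of a DFA for it. *)

definition conc :: "'a list set \<Rightarrow> 'a list set \<Rightarrow> 'a list set" where
  "conc A B = {a @ b | a b. a \<in> A \<and> b \<in> B}"

inductive_set star :: "'a list set \<Rightarrow> 'a list set" for A where
  star_Nil: "[] \<in> star A"
| star_append: "a \<in> A \<Longrightarrow> y \<in> star A \<Longrightarrow> a @ y \<in> star A"

fun sem_rexp :: "'p rexp \<Rightarrow> 'p set list set" where
  "sem_rexp Eps = {[]}"
| "sem_rexp (Atom x) = {[a] | a. a \<in> sem_atomic x}"
| "sem_rexp (Plus r s) = sem_rexp r \<union> sem_rexp s"
| "sem_rexp (Conc r s) = conc (sem_rexp r) (sem_rexp s)"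
| "sem_rexp (Star r) = star (sem_rexp r)"

lemma map_upt_append:
  "i \<le> k \<Longrightarrow> k \<le> j \<Longrightarrow> map w [i..<j] = map w [i..<k] @ map w [k..<j]"
  by (metis le_add_diff_inverse upt_add_eq_append map_append)

lemma map_upt_eq_append:
  assumes "map w [i..<j] = a @ b" and "i \<le> j"
  shows "i + length a \<le> j \<and> map w [i..<i + length a] = a \<and> map w [i + length a..<j] = b"
proof -
  have k: "i + length a \<le> j"
    using arg_cong[OF assms(1), of length] assms(2) by simp
  then have "map w [i..<i + length a] @ map w [i + length a..<j] = a @ b"
    using assms map_upt_append[of i "i + length a" j w] by simp
  with k show ?thesis
    by (subst (asm) append_eq_append_conv) auto
qed

lemma matches_imp_sem_rexp: "matches w i j r \<Longrightarrow> i \<le> j \<and> map w [i..<j] \<in> sem_rexp r"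
proof (induction rule: matches.induct)
  case (m_conc i k j w r1 r2)
  then show ?case
    using map_upt_append[of i k j w] by (auto simp: conc_def)
next
  case (m_starS i k j w r)
  then show ?case
    using map_upt_append[of i k j w] by (auto intro: star_append)
qed (auto intro: star_Nil)

lemma sem_rexp_imp_matches: "i \<le> j \<Longrightarrow> map w [i..<j] \<in> sem_rexp r \<Longrightarrow> matches w i j r"
proof (induction r arbitrary: i j)
  case Eps
  then show ?case
    by (auto intro: matches.intros)
next
  case (Atom x)
  then obtain a where a: "map w [i..<j] = [a]" "a \<in> sem_atomic x"
    by auto
  moreover have "j = Suc i"
    using arg_cong[OF a(1), of length] by simp
  ultimately show ?case
    by (auto intro: matches.intros)
next
  case (Plus r1 r2)
  then show ?case
    by (auto intro: matches.intros)
next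
  case (Conc r1 r2)
  then obtain a b where ab: "map w [i..<j] = a @ b" "a \<in> sem_rexp r1" "b \<in> sem_rexp r2"
    by (auto simp: conc_def)
  with map_upt_eq_append[OF ab(1) Conc.prems(1)] Conc.IH show ?case
    by (intro m_conc[of i "i + length a"]) auto
next
  case (Star r)
  have "matches w i j (Star r)" if "x \<in> star (sem_rexp r)" "map w [i..<j] = x" "i \<le> j" for x
    using that
  proof (induction x arbitrary: i rule: star.induct)
    case star_Nil
    then show ?case
      using m_star0 by fastforce
  next
    case (star_append a y)
    note split = map_upt_eq_append[OF star_append.prems]
    show ?case
    proof (cases "a = []")
      case True
      with star_append show ?thesis
        by simp
    next
      case False
      with split star_append Star.IH show ?thesis
        by (intro m_starS[of i "i + length a"]) auto
    qed
  qed
  with Star.prems show ?case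
    by simp
qed

lemma matches_iff_sem_rexp: "matches w i j r \<longleftrightarrow> i \<le> j \<and> map w [i..<j] \<in> sem_rexp r"
  using matches_imp_sem_rexp sem_rexp_imp_matches by blast

lemma lang_eq_sem_rexp: "lang r = sem_rexp r"
  by (auto simp: lang_def matches_iff_sem_rexp map_nth)

lemma star_append_star: "x \<in> star A \<Longrightarrow> y \<in> star A \<Longrightarrow> x @ y \<in> star A"
  by (induction x rule: star.induct) (auto intro: star.intros)

lemma append_in_star_split:
  assumes "w @ x \<in> star A" and "w \<noteq> []"
  shows "\<exists>w1 w2 x1 x2. w = w1 @ w2 \<and> w1 \<in> star A \<and> x = x1 @ x2 \<and> w2 @ x1 \<in> A \<and> x2 \<in> star A"
  using assms
proof (induction "w @ x" arbitrary: w x rule: star.induct)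
  case star_Nil
  then show ?case by simp
next
  case (star_append a y)
  obtain us where "a = w @ us \<and> us @ y = x \<or> a @ us = w \<and> y = us @ x"
    using \<open>a @ y = w @ x\<close> append_eq_append_conv2[of a y w x] by blast
  then consider (inside) "a = w @ us" "x = us @ y" | (beyond) "w = a @ us" "y = us @ x" "us \<noteq> []"
    by (cases "us = []") auto
  then show ?case
  proof cases
    case inside
    with star_append.hyps(1,2) show ?thesis
      by (intro exI[of _ "[]"] exI[of _ w] exI[of _ us] exI[of _ y]) (simp add: star.star_Nil)
  next
    case beyond
    then obtain w1 w2 x1 x2 where "us = w1 @ w2" "w1 \<in> star A" "x = x1 @ x2"
        "w2 @ x1 \<in> A" "x2 \<in> star A"
      using star_append.hyps(3) by blast
    with beyond star_append.hyps(1) show ?thesis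
      by (intro exI[of _ "a @ w1"] exI[of _ w2] exI[of _ x1] exI[of _ x2]) (simp add: star.star_append)
  qed
qed

definition Derivs :: "'a list \<Rightarrow> 'a list set \<Rightarrow> 'a list set" where
  "Derivs w A = {x. w @ x \<in> A}"

definition derivatives :: "'a list set \<Rightarrow> 'a list set set" where
  "derivatives A = range (\<lambda>w. Derivs w A)"

lemma Derivs_Nil [simp]: "Derivs [] A = A"
  by (simp add: Derivs_def)

lemma Derivs_Derivs [simp]: "Derivs w' (Derivs w A) = Derivs (w @ w') A"
  by (simp add: Derivs_def)

lemma Derivs_union: "Derivs w (A \<union> B) = Derivs w A \<union> Derivs w B"
  by (auto simp: Derivs_def)

lemma Derivs_conc:
  "Derivs w (conc A B) =
     conc (Derivs w A) B \<union> (\<Union>w2 \<in> {w2. \<exists>w1. w = w1 @ w2 \<and> w1 \<in> A}. Derivs w2 B)"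
proof (intro equalityI subsetI)
  fix x assume "x \<in> Derivs w (conc A B)"
  then obtain a b where ab: "w @ x = a @ b" "a \<in> A" "b \<in> B"
    by (auto simp: Derivs_def conc_def)
  from ab(1) obtain us where "w = a @ us \<and> us @ x = b \<or> w @ us = a \<and> x = us @ b"
    by (auto simp: append_eq_append_conv2)
  with ab show "x \<in> conc (Derivs w A) B \<union> (\<Union>w2 \<in> {w2. \<exists>w1. w = w1 @ w2 \<and> w1 \<in> A}. Derivs w2 B)"
    by (auto simp: Derivs_def conc_def)
next
  fix x assume "x \<in> conc (Derivs w A) B \<union> (\<Union>w2 \<in> {w2. \<exists>w1. w = w1 @ w2 \<and> w1 \<in> A}. Derivs w2 B)"
  then show "x \<in> Derivs w (conc A B)"
  proof
    assume "x \<in> conc (Derivs w A) B"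
    then obtain a b where "x = a @ b" "w @ a \<in> A" "b \<in> B"
      by (auto simp: Derivs_def conc_def)
    then show ?thesis
      unfolding Derivs_def conc_def by (intro CollectI exI[of _ "w @ a"] exI[of _ b]) simp
  next
    assume "x \<in> (\<Union>w2 \<in> {w2. \<exists>w1. w = w1 @ w2 \<and> w1 \<in> A}. Derivs w2 B)"
    then obtain w1 w2 where "w = w1 @ w2" "w1 \<in> A" "w2 @ x \<in> B"
      by (auto simp: Derivs_def)
    then show ?thesis
      unfolding Derivs_def conc_def by (intro CollectI exI[of _ w1] exI[of _ "w2 @ x"]) simp
  qed
qed

lemma Derivs_star:
  assumes "w \<noteq> []"
  shows "Derivs w (star A) = (\<Union>w2 \<in> {w2. \<exists>w1. w = w1 @ w2 \<and> w1 \<in> star A}. conc (Derivs w2 A) (star A))"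
proof (intro equalityI subsetI)
  fix x assume "x \<in> Derivs w (star A)"
  then have "w @ x \<in> star A"
    by (simp add: Derivs_def)
  then obtain w1 w2 x1 x2 where "w = w1 @ w2" "w1 \<in> star A" "x = x1 @ x2"
      "w2 @ x1 \<in> A" "x2 \<in> star A"
    using append_in_star_split[OF _ assms] by blast
  then show "x \<in> (\<Union>w2 \<in> {w2. \<exists>w1. w = w1 @ w2 \<and> w1 \<in> star A}. conc (Derivs w2 A) (star A))"
    by (auto simp: Derivs_def conc_def)
next
  fix x assume "x \<in> (\<Union>w2 \<in> {w2. \<exists>w1. w = w1 @ w2 \<and> w1 \<in> star A}. conc (Derivs w2 A) (star A))"
  then obtain w1 w2 a b where "w = w1 @ w2" "w1 \<in> star A" "x = a @ b" "w2 @ a \<in> A" "b \<in> star A"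
    by (auto simp: Derivs_def conc_def)
  then have "w1 @ ((w2 @ a) @ b) \<in> star A"
    by (intro star_append_star star_append)
  then show "x \<in> Derivs w (star A)"
    by (simp add: Derivs_def \<open>w = w1 @ w2\<close> \<open>x = a @ b\<close>)
qed

lemma finite_derivatives_union:
  assumes "finite (derivatives A)" and "finite (derivatives B)"
  shows "finite (derivatives (A \<union> B))"
proof -
  have "derivatives (A \<union> B) \<subseteq> (\<lambda>(X, Y). X \<union> Y) ` (derivatives A \<times> derivatives B)"
    by (auto simp: derivatives_def Derivs_union)
  then show ?thesis
    by (rule finite_subset) (use assms in simp)
qed

lemma finite_derivatives_conc:
  assumes "finite (derivatives A)" and "finite (derivatives B)"
  shows "finite (derivatives (conc A B))"
proof -
  have "derivatives (conc A B) \<subseteq>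
      (\<lambda>(X, S). conc X B \<union> \<Union>S) ` (derivatives A \<times> Pow (derivatives B))"
  proof
    fix Z assume "Z \<in> derivatives (conc A B)"
    then obtain w where "Z = Derivs w (conc A B)"
      by (auto simp: derivatives_def)
    then show "Z \<in> (\<lambda>(X, S). conc X B \<union> \<Union>S) ` (derivatives A \<times> Pow (derivatives B))"
      unfolding Derivs_conc derivatives_def
      by (intro image_eqI[of _ _ "(Derivs w A, (\<lambda>w2. Derivs w2 B) ` {w2. \<exists>w1. w = w1 @ w2 \<and> w1 \<in> A})"])
        auto
  qed
  then show ?thesis
    by (rule finite_subset) (use assms in simp)
qed

lemma finite_derivatives_star:
  assumes "finite (derivatives A)"
  shows "finite (derivatives (star A))"
proof -
  have "derivatives (star A) \<subseteq>
      insert (star A) ((\<lambda>S. \<Union>X\<in>S. conc X (star A)) ` Pow (derivatives A))"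
  proof
    fix Z assume "Z \<in> derivatives (star A)"
    then obtain w where Z: "Z = Derivs w (star A)"
      by (auto simp: derivatives_def)
    show "Z \<in> insert (star A) ((\<lambda>S. \<Union>X\<in>S. conc X (star A)) ` Pow (derivatives A))"
    proof (cases "w = []")
      case False
      then show ?thesis
        unfolding Z Derivs_star[OF False] derivatives_def
        by (intro insertI2 image_eqI[of _ _ "(\<lambda>w2. Derivs w2 A) ` {w2. \<exists>w1. w = w1 @ w2 \<and> w1 \<in> star A}"])
          auto
    qed (simp add: Z)
  qed
  then show ?thesis
    by (rule finite_subset) (use assms in simp)
qed

lemma finite_derivatives_sem_rexp: "finite (derivatives (sem_rexp r))"
proof (induction r)
  case Eps
  have "derivatives (sem_rexp Eps) \<subseteq> {{[]}, {}}"
    by (auto simp: derivatives_def Derivs_def)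
  then show ?case
    by (rule finite_subset) simp
next
  case (Atom x)
  have "Derivs w (sem_rexp (Atom x)) \<in> {sem_rexp (Atom x), {[]}, {}}" for w
  proof (cases w)
    case (Cons a w')
    then have "Derivs w (sem_rexp (Atom x)) = (if w' = [] \<and> a \<in> sem_atomic x then {[]} else {})"
      by (auto simp: Derivs_def)
    then show ?thesis
      by simp
  qed simp
  then have "derivatives (sem_rexp (Atom x)) \<subseteq> {sem_rexp (Atom x), {[]}, {}}"
    by (auto simp: derivatives_def)
  then show ?case
    by (rule finite_subset) (intro finite.intros)
next
  case (Plus r s)
  then show ?case
    by (simp only: sem_rexp.simps finite_derivatives_union)
next
  case (Conc r s)
  then show ?case
    by (simp only: sem_rexp.simps finite_derivatives_conc)
next
  case (Star r)
  then show ?case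
    by (simp only: sem_rexp.simps finite_derivatives_star)
qed

lemma ex_dfa_if_finite_derivatives:
  assumes "finite (derivatives L)"
  shows "\<exists>A. is_dfa A \<and> dfa_lang A = L"
proof -
  obtain f :: "'a list set \<Rightarrow> nat" where f: "inj_on f (derivatives L)"
    using finite_imp_inj_to_nat_seg[OF assms] by blast
  define \<delta> where "\<delta> q a = f (Derivs [a] (inv_into (derivatives L) f q))" for q a
  define F where "F = f ` {X \<in> derivatives L. [] \<in> X}"
  have Derivs_in: "Derivs w X \<in> derivatives L" if "X \<in> derivatives L" for w X
    using that by (auto simp: derivatives_def)
  have run: "foldl \<delta> (f X) w = f (Derivs w X)" if "X \<in> derivatives L" for X w
    using that
  proof (induction w arbitrary: X)
    case (Cons a w)
    then show ?case
      using Derivs_in[OF Cons.prems] by (simp add: \<delta>_def inv_into_f_f[OF f])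
  qed simp
  have L_in: "L \<in> derivatives L"
    unfolding derivatives_def by (metis Derivs_Nil rangeI)
  have "is_dfa (f ` derivatives L, f L, \<delta>, F)"
    using assms L_in Derivs_in by (auto simp: is_dfa_def F_def \<delta>_def inv_into_into)
  moreover have "dfa_lang (f ` derivatives L, f L, \<delta>, F) = L"
  proof -
    have "f (Derivs w L) \<in> F \<longleftrightarrow> [] \<in> Derivs w L" for w
      using Derivs_in[OF L_in] by (auto simp: F_def inj_on_eq_iff[OF f])
    then show ?thesis
      by (auto simp: dfa_lang_def run[OF L_in] Derivs_def)
  qed
  ultimately show ?thesis
    by blast
qed

lemma min_dfa_size_attained:
  assumes "\<exists>A. is_dfa A \<and> dfa_lang A = L"
  shows "\<exists>A. is_dfa A \<and> dfa_lang A = L \<and> card (dfa_states A) = min_dfa_size L"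
  using assms LeastI_ex[of "\<lambda>n. \<exists>A. is_dfa A \<and> dfa_lang A = L \<and> card (dfa_states A) = n"]
  unfolding min_dfa_size_def by blast

lemma foldl_in_states: "is_dfa (Q, q0, \<delta>, F) \<Longrightarrow> q \<in> Q \<Longrightarrow> foldl \<delta> q w \<in> Q"
  by (induction w arbitrary: q) (auto simp: is_dfa_def)

lemma matches_iff_dfa_run:
  assumes "dfa_lang (Q, q0, \<delta>, F) = lang r"
  shows "matches w i k r \<longleftrightarrow> i \<le> k \<and> foldl \<delta> q0 (map w [i..<k]) \<in> F"
  using assms by (auto simp: matches_iff_sem_rexp lang_eq_sem_rexp[symmetric] dfa_lang_def)

definition periodic_from :: "nat \<Rightarrow> nat \<Rightarrow> (nat \<Rightarrow> 'a) \<Rightarrow> bool" where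
  "periodic_from n l W \<longleftrightarrow> (\<forall>p \<ge> n. W (p + l) = W p)"

lemma periodic_from_lasso: "periodic_from (length u) (length v) (lasso u v)"
proof -
  have "(p + length v - length u) mod length v = (p - length u) mod length v" if "length u \<le> p" for p
  proof -
    have "p + length v - length u = (p - length u) + length v"
      using that by simp
    then show ?thesis
      by simp
  qed
  then show ?thesis
    by (simp add: periodic_from_def lasso_def)
qed

lemma periodic_from_add_mult:
  assumes "periodic_from n l W" and "n \<le> p"
  shows "W (p + t * l) = W p"
proof (induction t)
  case (Suc t)
  have "W (p + Suc t * l) = W ((p + t * l) + l)"
    by (simp add: algebra_simps)
  also have "\<dots> = W (p + t * l)"
    using assms by (simp add: periodic_from_def)
  finally show ?case
    using Suc by simp
qed simp

lemma foldl_upt_cut_periods: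
  assumes per: "periodic_from n l W"
    and "i \<le> a" and "n \<le> a" and "a + t * l \<le> j"
    and repeat: "foldl \<delta> q (map W [i..<a + t * l]) = foldl \<delta> q (map W [i..<a])"
  shows "foldl \<delta> q (map W [i..<j - t * l]) = foldl \<delta> q (map W [i..<j])"
proof -
  have shift: "map W [a + t * l..<j] = map W [a..<j - t * l]"
  proof (rule nth_equalityI)
    fix s assume "s < length (map W [a + t * l..<j])"
    then have "map W [a + t * l..<j] ! s = W ((a + s) + t * l)"
      by (simp add: algebra_simps)
    also have "\<dots> = W (a + s)"
      using periodic_from_add_mult[OF per] \<open>n \<le> a\<close> by simp
    finally show "map W [a + t * l..<j] ! s = map W [a..<j - t * l] ! s"
      using \<open>s < _\<close> by simp
  qed simp
  have "foldl \<delta> q (map W [i..<j]) =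
      foldl \<delta> (foldl \<delta> q (map W [i..<a + t * l])) (map W [a + t * l..<j])"
    using assms(2,4) by (simp add: map_upt_append[of i "a + t * l" j])
  also have "\<dots> = foldl \<delta> (foldl \<delta> q (map W [i..<a])) (map W [a..<j - t * l])"
    using repeat shift by simp
  also have "\<dots> = foldl \<delta> q (map W [i..<j - t * l])"
    using assms(2,4) by (simp add: map_upt_append[of i a "j - t * l"])
  finally show ?thesis
    by simp
qed

lemma pigeonhole_atMost:
  assumes "finite Q" and "card Q \<le> m" and "\<And>t. t \<le> m \<Longrightarrow> f t \<in> Q"
  shows "\<exists>t1 t2. t1 < t2 \<and> t2 \<le> m \<and> f t1 = f t2"
proof -
  have "f ` {0..m} \<subseteq> Q"
    using assms(3) by auto
  then have "card (f ` {0..m}) \<le> m"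
    using assms(1,2) card_mono[of Q "f ` {0..m}"] by simp
  then have "\<not> inj_on f {0..m}"
    using pigeonhole[of f "{0..m}"] by simp
  then show ?thesis
    unfolding inj_on_def by (metis atLeastAtMost_iff linorder_neq_iff)
qed

lemma dfa_pump_down:
  assumes dfa: "is_dfa (Q, q0, \<delta>, F)" and "card Q = m"
    and per: "periodic_from n l W" and "0 < l"
    and "i \<le> n" and "n + m * l < j"
    and acc: "foldl \<delta> q0 (map W [i..<j]) \<in> F"
  shows "\<exists>j'. n < j' \<and> j' < j \<and> j' mod l = j mod l \<and> foldl \<delta> q0 (map W [i..<j']) \<in> F"
proof -
  define state where "state p = foldl \<delta> q0 (map W [i..<p])" for p
  define a where "a = j - m * l"
  have j: "j = a + m * l" and "n < a"
    using \<open>n + m * l < j\<close> by (simp_all add: a_def)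
  have "finite Q" and "q0 \<in> Q"
    using dfa by (auto simp: is_dfa_def)
  then obtain t1 t2 where "t1 < t2" "t2 \<le> m" and repeat: "state (a + t1 * l) = state (a + t2 * l)"
    using pigeonhole_atMost[of Q m "\<lambda>t. state (a + t * l)"] foldl_in_states[OF dfa]
    by (auto simp: state_def \<open>card Q = m\<close>)
  define d where "d = t2 - t1"
  have t2: "a + t2 * l = (a + t1 * l) + d * l"
    using \<open>t1 < t2\<close> by (simp add: d_def algebra_simps flip: add_mult_distrib)
  have "t2 * l \<le> m * l"
    using \<open>t2 \<le> m\<close> by simp
  then have "(a + t1 * l) + d * l \<le> j"
    using j t2 by linarith
  then have "state (j - d * l) = state j"
    using foldl_upt_cut_periods[OF per, of i "a + t1 * l" d j \<delta> q0] repeat t2 \<open>i \<le> n\<close> \<open>n < a\<close>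
    by (simp add: state_def)
  moreover have "d * l \<le> m * l" and "0 < d * l"
    using \<open>t1 < t2\<close> \<open>t2 \<le> m\<close> \<open>0 < l\<close> by (simp_all add: d_def)
  then have "n < j - d * l" and "j - d * l < j"
    using j \<open>n < a\<close> by linarith+
  moreover have "(j - d * l) mod l = j mod l"
    using \<open>d * l \<le> m * l\<close> j by (metis le_add_diff_inverse2 le_add2 mod_mult_self1 order_trans)
  ultimately show ?thesis
    using acc by (intro exI[of _ "j - d * l"]) (simp add: state_def)
qed

lemma dfa_accepting_position_bounded:
  assumes dfa: "is_dfa (Q, q0, \<delta>, F)" and "card Q = m"
    and per: "periodic_from n l W" and "0 < l" and "i \<le> n"
    and "n < j" and "foldl \<delta> q0 (map W [i..<j]) \<in> F"
  shows "\<exists>k. n \<le> k \<and> k \<le> n + m * l \<and> foldl \<delta> q0 (map W [i..<k]) \<in> F \<and> k mod l = j mod l"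
  using \<open>n < j\<close> \<open>foldl \<delta> q0 (map W [i..<j]) \<in> F\<close>
proof (induction j rule: less_induct)
  case (less j)
  show ?case
  proof (cases "j \<le> n + m * l")
    case True
    with less.prems show ?thesis
      by (intro exI[of _ j]) simp
  next
    case False
    then obtain j' where "n < j'" "j' < j" "j' mod l = j mod l" "foldl \<delta> q0 (map W [i..<j']) \<in> F"
      using dfa_pump_down[OF dfa \<open>card Q = m\<close> per \<open>0 < l\<close> \<open>i \<le> n\<close>] less.prems by (meson not_le)
    with less.IH[of j'] show ?thesis
      by auto
  qed
qed

theorem lemma2:
  fixes u v :: "('p::finite) set list" and \<rho> :: "'p rexp" and i j m :: nat
  assumes "v \<noteq> []"
    and "m = min_dfa_size (lang \<rho>)"
    and "matches (lasso u v) i j \<rho>"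
    and "i \<le> length u" and "length u < j"
  shows "\<exists>k. length u \<le> k \<and> k \<le> length u + m * length v
           \<and> matches (lasso u v) i k \<rho> \<and> k mod length v = j mod length v"
proof -
  have "\<exists>A. is_dfa A \<and> dfa_lang A = lang \<rho>"
    using ex_dfa_if_finite_derivatives[OF finite_derivatives_sem_rexp] by (simp add: lang_eq_sem_rexp)
  then obtain A where "is_dfa A" "dfa_lang A = lang \<rho>" "card (dfa_states A) = m"
    using min_dfa_size_attained assms(2) by blast
  then obtain Q q0 \<delta> F where dfa: "is_dfa (Q, q0, \<delta>, F)" and card: "card Q = m"
    and lang: "dfa_lang (Q, q0, \<delta>, F) = lang \<rho>"
    by (cases A) (auto simp: dfa_states_def)
  note run = matches_iff_dfa_run[OF lang]
  have "foldl \<delta> q0 (map (lasso u v) [i..<j]) \<in> F"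
    using assms(3) run by blast
  then obtain k where "length u \<le> k" "k \<le> length u + m * length v" "k mod length v = j mod length v"
      "foldl \<delta> q0 (map (lasso u v) [i..<k]) \<in> F"
    using dfa_accepting_position_bounded[OF dfa card periodic_from_lasso] assms(1,4,5) by blast
  with run assms(4) show ?thesis
    by (intro exI[of _ k]) simp
qed

end
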